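(* Let $\mathcal{A}=\{a_1,\dots,a_{n+3}\}\subset\mathbb{Z}^n$ affinely generate $\mathbb{Z}^n$ with $a_1=\mathbf{O}$, fix an odd cell $C$ of $\mathcal{A}$, and let $\Gamma$, $\overline{\nabla}_{\mathcal{A}}\subseteq\mathbb{C}^2$ and $\overline{\Delta}_{\mathcal{A}}$ be as in the context. Let $\ell_i([\lambda_1:\lambda_2])=\alpha_i\lambda_1+\beta_i\lambda_2$ ($i=1,\dots,n+3$) be linear forms with real coefficients such that $\{(\ell_1(\lambda),\dots,\ell_{n+3}(\lambda)):\lambda\in\mathbb{C}^2\}$ is the space of all $u\in\mathbb{C}^{n+3}$ with $\mathcal{A}u=\mathbf{O}$ and $\sum_iu_i=0$, and set $\Psi(\lambda)=\Gamma(\ell_1(\lambda),\dots,\ell_{n+3}(\lambda))$, viewed as a (multivalued) map defined on $\mathbb{P}^1_{\mathbb{C}}$. Let $Z$ be the set of points of $\overline{\nabla}_{\mathcal{A}}$ at which the gradient of $\overline{\Delta}_{\mathcal{A}}$ vanishes. If $\Psi([\lambda_1:\lambda_2])\in(\mathbb{R}^* )^2\cap(\overline{\nabla}_{\mathcal{A}}\setminus Z)$, then $[\lambda_1:\lambda_2]$ can be chosen in $\mathbb{P}^1_{\mathbb{R}}$. In other words, $(\mathbb{R}^2\cap\overline{\nabla}_{\mathcal{A}})\setminus\Psi(\mathbb{P}^1_{\mathbb{R}})$ is finite.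
   Context: $\mathbb{R}^*=\mathbb{R}\setminus\{0\}$. Identify $\mathcal{A}$ with the $n\times(n+3)$ integer matrix with columns $a_i$. $\nabla_{\mathcal{A}}\subseteq\mathbb{P}^{n+2}_{\mathbb{C}}$ is the closure of the set of $[c_1:\cdots:c_{n+3}]$ such that the complex zero set of $\sum c_ix^{a_i}$ has a singular point in $(\mathbb{C}^* )^n$; when it has codimension $1$, $\Delta_{\mathcal{A}}\in\mathbb{Z}[c_1,\dots,c_{n+3}]$ is its irreducible defining polynomial (defined up to sign), otherwise $\Delta_{\mathcal{A}}=1$. An odd cell is a set $C=\{i_1,\dots,i_n\}\subseteq\{2,\dots,n+3\}$ with $\det[a_{i_1},\dots,a_{i_n}]$ odd; $C'=\{2,\dots,n+3\}\setminus C$ (two indices). For vectors/matrices indexed by $\{1,\dots,n+3\}$, subscripts $C$, $C'$ denote the corresponding entries/columns. $\Gamma(y)=\frac{y_{C'}}{y_1}\cdot\left(\frac{y_C}{y_1}\right)^{-\mathcal{A}_C^{-1}\mathcal{A}_{C'}}$ (coordinatewise operations; $w^M$ has $j$-th entry $\prod_iw_i^{M_{ij}}$), multivalued on complex inputs and single-valued real (using real odd roots, the denominators being odd) on real inputs. $\overline{\nabla}_{\mathcal{A}}\subseteq\mathbb{C}^2$ is the closure of $\{\Gamma(u): u\in(\mathbb{C}^* )^{n+3},\ \mathcal{A}u=\mathbf{O},\ \sum u_i=0\}$. The reduced discriminant is $\overline{\Delta}_{\mathcal{A}}(\delta_{C'})=\Delta_{\mathcal{A}}(\delta')$ where $\delta'$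 has entries $1$ at index $1$ and at the indices in $C$, and entries $\delta_{C'}$ at the indices in $C'$; it is an irreducible integer polynomial defining $\overline{\nabla}_{\mathcal{A}}$. *)

theory Defs
  imports "HOL-Analysis.Analysis" "Jordan_Normal_Form.Determinant"
    "HOL-Computational_Algebra.Polynomial"
begin

text \<open>Conventions: the configuration A = {a_1,...,a_{n+3}} is an integer matrix
  with n rows and n+3 columns; column index i (0-based) holds a_{i+1}.
  So a_1 is column 0, and cells are subsets of column indices {1..n+2}.
  Vectors indexed by {1..n+3} are functions on nat, index i-1 is used for entry i.\<close>

definition colsub :: "int mat \<Rightarrow> nat list \<Rightarrow> int mat" where
  "colsub A cs = mat (dim_row A) (length cs) (\<lambda>(r,k). A $$ (r, cs ! k))"

definition affinely_generates :: "int mat \<Rightarrow> bool" where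
  "affinely_generates A \<longleftrightarrow> (\<forall>v::nat \<Rightarrow> int. \<exists>c::nat \<Rightarrow> int.
     (\<Sum>i<dim_col A. c i) = 1 \<and>
     (\<forall>r<dim_row A. v r = (\<Sum>i<dim_col A. c i * A $$ (r,i))))"

definition odd_cell :: "int mat \<Rightarrow> nat set \<Rightarrow> bool" where
  "odd_cell A C \<longleftrightarrow> C \<subseteq> {1..<dim_col A} \<and> card C = dim_row A \<and>
     odd (det (colsub A (sorted_list_of_set C)))"

definition co_cell :: "int mat \<Rightarrow> nat set \<Rightarrow> nat list" where
  "co_cell A C = sorted_list_of_set ({1..<dim_col A} - C)"

definition gexp :: "int mat \<Rightarrow> nat set \<Rightarrow> rat mat" where
  "gexp A C = (THE M. M \<in> carrier_mat (dim_row A) 2 \<and>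
     map_mat rat_of_int (colsub A (sorted_list_of_set C)) * M =
       - map_mat rat_of_int (colsub A (co_cell A C)))"

text \<open>Real power with rational exponent of odd denominator, using real odd roots.\<close>
definition realpow_rat :: "real \<Rightarrow> rat \<Rightarrow> real" where
  "realpow_rat w q = (case quotient_of q of (a, b) \<Rightarrow> root (nat b) w powi a)"

definition gamma_real :: "int mat \<Rightarrow> nat set \<Rightarrow> (nat \<Rightarrow> real) \<Rightarrow> real \<times> real" where
  "gamma_real A C y = (let Cl = sorted_list_of_set C; D = co_cell A C; M = gexp A C;
     g = (\<lambda>j. y (D ! j) / y 0 *
            (\<Prod>i<dim_row A. realpow_rat (y (Cl ! i) / y 0) (M $$ (i, j))))
   in (g 0, g 1))"

text \<open>Multivalued complex Gamma: all values obtained from a choice of logarithms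
  L_i of (y_C / y_1)_i, namely y_{C'}/y_1 * exp (M^T L).\<close>
definition gamma_set :: "int mat \<Rightarrow> nat set \<Rightarrow> (nat \<Rightarrow> complex) \<Rightarrow> (complex \<times> complex) set" where
  "gamma_set A C y = (let Cl = sorted_list_of_set C; D = co_cell A C; M = gexp A C;
     g = (\<lambda>L j. y (D ! j) / y 0 *
            exp (\<Sum>i<dim_row A. of_rat (M $$ (i, j)) * L i))
   in {(g L 0, g L 1) | L. \<forall>i<dim_row A. exp (L i) = y (Cl ! i) / y 0})"

definition kernel_space :: "int mat \<Rightarrow> (nat \<Rightarrow> complex) set" where
  "kernel_space A = {u. (\<forall>i\<ge>dim_col A. u i = 0) \<and> (\<Sum>i<dim_col A. u i) = 0 \<and>
     (\<forall>r<dim_row A. (\<Sum>i<dim_col A. of_int (A $$ (r,i)) * u i) = 0)}"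

definition nabla_bar :: "int mat \<Rightarrow> nat set \<Rightarrow> (complex \<times> complex) set" where
  "nabla_bar A C = closure (\<Union>u \<in> {u \<in> kernel_space A. \<forall>i<dim_col A. u i \<noteq> 0}. gamma_set A C u)"

text \<open>Bivariate integer polynomials as int poly poly: p(x,y) = sum_i (coeff p i)(y) x^i.\<close>
definition eval2 :: "int poly poly \<Rightarrow> complex \<Rightarrow> complex \<Rightarrow> complex" where
  "eval2 p x y = poly (map_poly (\<lambda>q. poly (map_poly of_int q) y) p) x"

definition dX :: "int poly poly \<Rightarrow> int poly poly" where "dX p = pderiv p"
definition dY :: "int poly poly \<Rightarrow> int poly poly" where "dY p = map_poly pderiv p"

definition lform :: "(nat \<Rightarrow> real) \<Rightarrow> (nat \<Rightarrow> real) \<Rightarrow> nat \<Rightarrow> complex \<Rightarrow> complex \<Rightarrow> nat \<Rightarrow> complex" where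
  "lform \<alpha> \<beta> N l1 l2 = (\<lambda>i. if i < N then of_real (\<alpha> i) * l1 + of_real (\<beta> i) * l2 else 0)"

definition rlform :: "(nat \<Rightarrow> real) \<Rightarrow> (nat \<Rightarrow> real) \<Rightarrow> nat \<Rightarrow> real \<Rightarrow> real \<Rightarrow> nat \<Rightarrow> real" where
  "rlform \<alpha> \<beta> N m1 m2 = (\<lambda>i. if i < N then \<alpha> i * m1 + \<beta> i * m2 else 0)"

end

theory Submission
  imports Defs "HOL-Complex_Analysis.Complex_Analysis"
    "HOL-Computational_Algebra.Fundamental_Theorem_Algebra"
begin

text \<open>Write \<open>y = \<ell>(\<lambda>)\<close> for the kernel vector with \<open>(g\<^sub>1, g\<^sub>2) \<in> \<Gamma>(y)\<close>. Near \<open>y\<close> a branch of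
  \<open>\<Gamma>\<close> is holomorphic, and \<open>\<Gamma>\<close> maps the kernel into the zero set of \<open>p\<close>; differentiating
  \<open>p(\<Gamma>(\<ell>(x))) = 0\<close> shows that the logarithmic gradient \<open>w = (g\<^sub>1 \<partial>\<^sub>x p, g\<^sub>2 \<partial>\<^sub>y p)\<close>
  annihilates the Jacobian \<open>H\<close> of \<open>log \<Gamma>\<close> in the kernel basis adapted to the co-cell \<open>C'\<close>.
  This \<open>H\<close> is symmetric and, \<open>\<Gamma>\<close> being homogeneous of degree 0, it also annihilates \<open>y\<^sub>C\<^sub>'\<close>.
  If \<open>w\<close> and \<open>y\<^sub>C\<^sub>'\<close> were independent, \<open>H\<close> would vanish near \<open>y\<close> on a complex line through
  \<open>y\<close>; then \<open>\<Gamma>\<^sup>d\<close>, a Laurent monomial for the odd number \<open>d = |det A\<^sub>C|\<close>, would be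
  constant on that line, hence take only two values on the whole kernel, and the zero set of
  \<open>p\<close> would be finite. So \<open>y\<^sub>C\<^sub>'\<close> is a complex multiple of the real vector \<open>w\<close>; the adapted
  kernel basis being real, \<open>y\<close> is a multiple of a real kernel vector \<open>\<ell>(m)\<close>, and taking real
  odd roots of \<open>\<Gamma>\<^sup>d\<close> gives \<open>\<Gamma>(\<ell>(m)) = (g\<^sub>1, g\<^sub>2)\<close>.\<close>

section \<open>Bivariate integer polynomials\<close>

lemma map_poly_of_int_add:
  "map_poly (of_int :: int \<Rightarrow> complex) (a + b) = map_poly of_int a + map_poly of_int b"
  by (rule poly_eqI) (simp add: coeff_map_poly)

lemma map_poly_of_int_pderiv:
  "map_poly (of_int :: int \<Rightarrow> complex) (pderiv a) = pderiv (map_poly of_int a)"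
  by (rule poly_eqI) (simp add: coeff_map_poly coeff_pderiv)

lemma eval2_0 [simp]: "eval2 0 x y = 0"
  unfolding eval2_def by simp

lemma eval2_pCons: "eval2 (pCons a p) x y = poly (map_poly of_int a) y + x * eval2 p x y"
  unfolding eval2_def by (subst map_poly_pCons) auto

lemma eval2_add: "eval2 (p + q) x y = eval2 p x y + eval2 q x y"
proof -
  have "map_poly (\<lambda>q. poly (map_poly (of_int :: int \<Rightarrow> complex) q) y) (p + q) =
        map_poly (\<lambda>q. poly (map_poly of_int q) y) p + map_poly (\<lambda>q. poly (map_poly of_int q) y) q"
    by (rule poly_eqI) (simp add: coeff_map_poly map_poly_of_int_add)
  then show ?thesis unfolding eval2_def by simp
qed

lemma DERIV_eval2:
  assumes "(X has_field_derivative X') (at t)" "(Y has_field_derivative Y') (at t)"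
  shows "((\<lambda>t. eval2 p (X t) (Y t)) has_field_derivative
     eval2 (dX p) (X t) (Y t) * X' + eval2 (dY p) (X t) (Y t) * Y') (at t)"
proof (induction p rule: pCons_induct)
  case (pCons a p)
  have "((\<lambda>t. poly (map_poly of_int a) (Y t)) has_field_derivative
      poly (pderiv (map_poly of_int a)) (Y t) * Y') (at t)"
    using DERIV_chain2[OF poly_DERIV assms(2)] by simp
  from DERIV_add[OF this DERIV_mult[OF assms(1) pCons.IH]]
  have "((\<lambda>t. poly (map_poly of_int a) (Y t) + X t * eval2 p (X t) (Y t)) has_field_derivative
     poly (pderiv (map_poly of_int a)) (Y t) * Y' + (X' * eval2 p (X t) (Y t) +
       (eval2 (dX p) (X t) (Y t) * X' + eval2 (dY p) (X t) (Y t) * Y') * X t)) (at t)"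
    by simp
  moreover have "dX (pCons a p) = p + pCons 0 (dX p)"
    unfolding dX_def by (simp add: pderiv_pCons)
  moreover have "dY (pCons a p) = pCons (pderiv a) (dY p)"
    unfolding dY_def by (subst map_poly_pCons) auto
  ultimately show ?case
    by (simp add: eval2_pCons eval2_add map_poly_of_int_pderiv algebra_simps)
qed (simp add: dX_def dY_def)

lemma eval2_cnj: "cnj (eval2 p x y) = eval2 p (cnj x) (cnj y)"
proof (induction p rule: pCons_induct)
  case (pCons a p)
  have "cnj (poly (map_poly of_int a) y) = poly (map_poly of_int a) (cnj y)"
    by (simp add: poly_cnj map_poly_map_poly o_def)
  then show ?case using pCons.IH by (simp add: eval2_pCons)
qed simp

lemma eval2_of_real_in_Reals: "eval2 p (of_real a) (of_real b) \<in> \<real>"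
  using eval2_cnj[of p "of_real a" "of_real b"] by (simp add: Reals_cnj_iff)

text \<open>Either the leading coefficient in x is a nonzero constant, and the zero set contains a
  whole line, or it vanishes at finitely many y only, and the fundamental theorem of algebra gives
  a zero above every other y.\<close>
lemma eval2_zero_set_infinite:
  assumes "eval2 p x0 y0 = 0"
  shows "infinite {(x, y). eval2 p x y = 0}"
proof
  assume fin: "finite {(x, y). eval2 p x y = 0}"
  show False
  proof (cases "degree p = 0")
    case True
    then obtain c where "p = [:c:]" by (metis degree_eq_zeroE)
    then have "eval2 p x y0 = 0" for x using assms by (simp add: eval2_pCons)
    then have "(\<lambda>x. (x, y0)) ` UNIV \<subseteq> {(x, y). eval2 p x y = 0}" by auto
    then have "finite ((\<lambda>x::complex. (x, y0)) ` UNIV)" using fin finite_subset by blast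
    moreover have "inj (\<lambda>x::complex. (x, y0))" by (auto simp: inj_def)
    ultimately show False using finite_imageD infinite_UNIV_char_0 by blast
  next
    case False
    let ?lc = "map_poly (of_int :: int \<Rightarrow> complex) (lead_coeff p)"
    have "lead_coeff p \<noteq> 0" using False by auto
    then have "?lc \<noteq> 0" by (simp add: map_poly_eq_0_iff)
    then have fin_lc: "finite {y. poly ?lc y = 0}" by (rule poly_roots_finite)
    have "\<exists>x. eval2 p x y = 0" if "poly ?lc y \<noteq> 0" for y
    proof -
      let ?Q = "map_poly (\<lambda>q. poly (map_poly (of_int :: int \<Rightarrow> complex) q) y) p"
      have "coeff ?Q (degree p) \<noteq> 0" using that by (simp add: coeff_map_poly)
      then have "degree ?Q = degree p"
        using map_poly_degree_leq le_degree by (metis antisym)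
      then have "\<not> constant (poly ?Q)" using False by (simp add: constant_degree)
      then obtain x where "poly ?Q x = 0" using fundamental_theorem_of_algebra by blast
      then show ?thesis unfolding eval2_def by blast
    qed
    then have "- {y. poly ?lc y = 0} \<subseteq> snd ` {(x, y). eval2 p x y = 0}" by force
    then have "finite (- {y. poly ?lc y = 0})" using fin finite_subset by blast
    then show False using fin_lc infinite_UNIV_char_0 by (metis Compl_partition finite_Un)
  qed
qed

section \<open>Odd roots and logarithms\<close>

lemma realpow_rat_power:
  assumes "odd d" and "of_nat d * q = of_int e"
  shows "realpow_rat w q ^ d = w powi e"
proof -
  obtain a b where ab: "quotient_of q = (a, b)" by (cases "quotient_of q")
  have b: "b > 0" using quotient_of_denom_pos[OF ab] .
  have "of_nat d * (of_int a / of_int b) = (of_int e :: rat)"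
    using assms(2) quotient_of_div[OF ab] by simp
  then have "of_int (int d * a) = (of_int (e * b) :: rat)" using b by (simp add: field_simps)
  then have eq: "int d * a = e * b" by linarith
  then have "b dvd int d * a" by simp
  then have "b dvd int d"
    using quotient_of_coprime[OF ab] by (simp add: coprime_commute coprime_dvd_mult_left_iff)
  then obtain k where k: "int d = b * k" by blast
  have "odd b" using assms(1) k by (metis even_mult_iff even_of_nat)
  then have "odd (nat b)" using b by (simp add: even_nat_iff)
  then have root: "root (nat b) w ^ nat b = w" by (rule odd_real_root_pow)
  have "a * int d = int (nat b) * e" using eq k b by (simp add: algebra_simps)
  then have "realpow_rat w q ^ d = (root (nat b) w ^ nat b) powi e"
    unfolding realpow_rat_def ab by (simp add: power_int_power' power_int_power)
  then show ?thesis using root by simp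
qed

lemma DERIV_Ln_affine:
  assumes "0 < Re (a + t0 * b)"
  shows "((\<lambda>t. Ln (a + t * b)) has_field_derivative b / (a + t0 * b)) (at t0)"
proof -
  have "a + t0 * b \<notin> \<real>\<^sub>\<le>\<^sub>0"
  proof
    assume "a + t0 * b \<in> \<real>\<^sub>\<le>\<^sub>0"
    then obtain r where "a + t0 * b = of_real r" "r \<le> 0" by (auto simp: nonpos_Reals_def)
    then show False using assms by (metis Re_complex_of_real not_less)
  qed
  then have "(Ln has_field_derivative inverse (a + t0 * b)) (at (a + t0 * b))"
    by (rule has_field_derivative_Ln)
  moreover have "((\<lambda>t. a + t * b) has_field_derivative b) (at t0)"
    by (auto intro!: derivative_eq_intros)
  ultimately show ?thesis
    using DERIV_chain2 by (fastforce simp: divide_inverse mult.commute)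
qed

section \<open>Linear algebra\<close>

lemma sum_set_distinct_list:
  "distinct xs \<Longrightarrow> sum f (set xs) = (\<Sum>i<length xs. f (xs ! i))"
  by (simp add: sum_list_distinct_conv_sum_set[symmetric] sum_list_sum_nth atLeast0LessThan)

lemma index_mult_mat_sum:
  "X \<in> carrier_mat a b \<Longrightarrow> Y \<in> carrier_mat b c \<Longrightarrow> i < a \<Longrightarrow> j < c \<Longrightarrow>
   (X * Y) $$ (i, j) = (\<Sum>k<b. X $$ (i, k) * Y $$ (k, j))"
  by (auto simp: scalar_prod_def atLeast0LessThan intro!: sum.cong)

lemma int_mat_kernel_trivial:
  fixes B :: "int mat" and x :: "nat \<Rightarrow> 'a :: field_char_0"
  assumes B: "B \<in> carrier_mat n n" and "det B \<noteq> 0"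
    and sol: "\<forall>r<n. (\<Sum>k<n. of_int (B $$ (r, k)) * x k) = 0" and "i < n"
  shows "x i = 0"
proof -
  let ?adj = "adj_mat B"
  have adj: "(\<Sum>r<n. ?adj $$ (i, r) * B $$ (r, k)) = (if i = k then det B else 0)" if "k < n" for k
  proof -
    have "(?adj * B) $$ (i, k) = (det B \<cdot>\<^sub>m 1\<^sub>m n) $$ (i, k)"
      using adj_mat(3)[OF B] by simp
    then show ?thesis
      using index_mult_mat_sum[OF adj_mat(1)[OF B] B \<open>i < n\<close> that] \<open>i < n\<close> that
      by (cases "i = k") auto
  qed
  have "of_int (det B) * x i = (\<Sum>k<n. if k = i then of_int (det B) * x k else 0)"
    using \<open>i < n\<close> by simp
  also have "\<dots> = (\<Sum>k<n. of_int (if i = k then det B else 0) * x k)"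
    by (intro sum.cong) auto
  also have "\<dots> = (\<Sum>k<n. (\<Sum>r<n. of_int (?adj $$ (i, r)) * of_int (B $$ (r, k))) * x k)"
  proof (intro sum.cong refl)
    fix k assume "k \<in> {..<n}"
    then show "of_int (if i = k then det B else 0) * x k =
        (\<Sum>r<n. of_int (?adj $$ (i, r)) * of_int (B $$ (r, k))) * x k"
      using adj[of k] by (simp flip: of_int_mult of_int_sum)
  qed
  also have "\<dots> = (\<Sum>k<n. \<Sum>r<n. of_int (?adj $$ (i, r)) * (of_int (B $$ (r, k)) * x k))"
    by (simp add: sum_distrib_right mult.assoc)
  also have "\<dots> = (\<Sum>r<n. of_int (?adj $$ (i, r)) * (\<Sum>k<n. of_int (B $$ (r, k)) * x k))"
    by (subst sum.swap) (simp add: sum_distrib_left)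
  also have "\<dots> = 0" using sol by simp
  finally show ?thesis using \<open>det B \<noteq> 0\<close> by simp
qed

lemma independent_coordinates:
  fixes z1 z2 e1 e2 :: "'a :: field"
  assumes "z1 * e2 - z2 * e1 \<noteq> 0"
  obtains a b where "x1 = a * z1 + b * e1" "x2 = a * z2 + b * e2"
proof
  let ?\<delta> = "z1 * e2 - z2 * e1" and ?a = "x1 * e2 - x2 * e1" and ?b = "z1 * x2 - z2 * x1"
  have "?a * z1 + ?b * e1 = x1 * ?\<delta>" "?a * z2 + ?b * e2 = x2 * ?\<delta>"
    by (simp_all add: algebra_simps)
  then show "x1 = ?a / ?\<delta> * z1 + ?b / ?\<delta> * e1" "x2 = ?a / ?\<delta> * z2 + ?b / ?\<delta> * e2"
    using assms by (simp_all add: add_divide_distrib[symmetric] eq_divide_eq)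
qed

section \<open>Coordinates adapted to an odd cell\<close>

locale odd_cell_coords =
  fixes A :: "int mat" and n :: nat and C :: "nat set"
  assumes A_carrier: "A \<in> carrier_mat n (n + 3)"
    and first_col_zero: "\<forall>r<n. A $$ (r, 0) = 0"
    and odd_cell: "odd_cell A C"
begin

definition cell :: "nat list" where "cell = sorted_list_of_set C"
definition cocell :: "nat list" where "cocell = co_cell A C"

lemma dim_A: "dim_row A = n" "dim_col A = n + 3"
  using A_carrier by auto

lemma C_subset: "C \<subseteq> {1..<n+3}" and card_C: "card C = n"
  using odd_cell dim_A unfolding odd_cell_def by auto

lemma finite_C: "finite C"
  using C_subset finite_subset by blast

lemma cell: "length cell = n" "distinct cell" "set cell = C"
  using finite_C card_C unfolding cell_def by auto

lemma cocell: "set cocell = {1..<n+3} - C" "distinct cocell"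
  unfolding cocell_def co_cell_def dim_A by auto

lemma length_cocell: "length cocell = 2"
proof -
  have "card ({1..<n+3} - C) = 2"
    using C_subset finite_C card_C by (simp add: card_Diff_subset)
  then show ?thesis using cocell distinct_card by fastforce
qed

lemma cell_nth: "i < n \<Longrightarrow> cell ! i \<in> C \<and> cell ! i \<noteq> 0 \<and> cell ! i < n + 3"
  using cell(1,3) C_subset nth_mem[of i cell] by auto

lemma cocell_nth: "j < 2 \<Longrightarrow> cocell ! j \<notin> C \<and> cocell ! j \<noteq> 0 \<and> cocell ! j < n + 3"
  using cocell(1) length_cocell nth_mem[of j cocell] by auto

lemma cocell_nth_distinct: "cocell ! 0 \<noteq> cocell ! 1"
  using cocell length_cocell by (simp add: nth_eq_iff_index_eq)

lemma index_cases:
  assumes "k < n + 3"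
  obtains "k = 0" | i where "i < n" "k = cell ! i" | "k = cocell ! 0" | "k = cocell ! 1"
proof -
  have "k \<in> insert 0 (set cell \<union> set cocell)" using assms cell cocell C_subset by auto
  moreover have "set cocell = {cocell ! 0, cocell ! 1}"
    using length_cocell by (auto simp: set_conv_nth less_2_cases_iff)
  ultimately show ?thesis using that cell(1,3) in_set_conv_nth[of k cell] by auto
qed

lemma sum_split_cell:
  "(\<Sum>k<n+3. f k) = f 0 + (\<Sum>i<n. f (cell ! i)) + (f (cocell ! 0) + f (cocell ! 1))"
proof -
  have U: "{..<n+3} = insert 0 (set cell \<union> set cocell)"
    using cell cocell C_subset by auto
  have "(\<Sum>k<n+3. f k) = f 0 + sum f (set cell \<union> set cocell)"
    unfolding U using cell cocell C_subset finite_C by (subst sum.insert) auto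
  also have "sum f (set cell \<union> set cocell) = sum f (set cell) + sum f (set cocell)"
    using cell cocell finite_C by (intro sum.union_disjoint) auto
  also have "sum f (set cocell) = f (cocell ! 0) + f (cocell ! 1)"
    using sum_set_distinct_list[of cocell f] cocell length_cocell by (simp add: numeral_2_eq_2)
  finally show ?thesis using sum_set_distinct_list[of cell f] cell by (simp add: add.assoc)
qed

definition A_cell :: "int mat" where "A_cell = colsub A cell"
definition A_cocell :: "int mat" where "A_cocell = colsub A cocell"
definition adj_cell :: "int mat" where "adj_cell = adj_mat A_cell"

lemma A_cell_carrier: "A_cell \<in> carrier_mat n n"
  unfolding A_cell_def colsub_def using cell dim_A by auto

lemma A_cocell_carrier: "A_cocell \<in> carrier_mat n 2"
  unfolding A_cocell_def colsub_def using length_cocell dim_A by auto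

lemma adj_cell_carrier: "adj_cell \<in> carrier_mat n n"
  unfolding adj_cell_def using adj_mat(1)[OF A_cell_carrier] .

lemma A_cell_index: "r < n \<Longrightarrow> i < n \<Longrightarrow> A_cell $$ (r, i) = A $$ (r, cell ! i)"
  unfolding A_cell_def colsub_def using cell dim_A by auto

lemma A_cocell_index: "r < n \<Longrightarrow> j < 2 \<Longrightarrow> A_cocell $$ (r, j) = A $$ (r, cocell ! j)"
  unfolding A_cocell_def colsub_def using length_cocell dim_A by auto

lemma odd_det_A_cell: "odd (det A_cell)"
  using odd_cell unfolding odd_cell_def A_cell_def cell_def by auto

lemma det_A_cell_nonzero: "det A_cell \<noteq> 0"
  using odd_det_A_cell by auto

text \<open>By Cramer's rule, the exponent matrix is \<open>- A_cell\<^sup>-\<^sup>1 A_cocell = - adj A_cell A_cocell / det A_cell\<close>.\<close>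
definition expo_mat :: "rat mat" where
  "expo_mat = mat n 2 (\<lambda>(i, j). - rat_of_int ((adj_cell * A_cocell) $$ (i, j)) / rat_of_int (det A_cell))"

lemma A_cell_adj_cell_A_cocell:
  assumes "r < n" "j < 2"
  shows "(\<Sum>i<n. A_cell $$ (r, i) * (adj_cell * A_cocell) $$ (i, j)) = det A_cell * A_cocell $$ (r, j)"
proof -
  have "A_cell * (adj_cell * A_cocell) = (A_cell * adj_cell) * A_cocell"
    using A_cell_carrier adj_cell_carrier A_cocell_carrier by simp
  also have "\<dots> = det A_cell \<cdot>\<^sub>m A_cocell"
    using adj_mat(2)[OF A_cell_carrier] mult_smult_assoc_mat[OF one_carrier_mat A_cocell_carrier]
      A_cocell_carrier unfolding adj_cell_def by simp
  finally have "(A_cell * (adj_cell * A_cocell)) $$ (r, j) = det A_cell * A_cocell $$ (r, j)"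
    using assms A_cocell_carrier by simp
  then show ?thesis
    using index_mult_mat_sum[OF A_cell_carrier mult_carrier_mat[OF adj_cell_carrier A_cocell_carrier]]
      assms by simp
qed

lemma A_cell_expo_mat:
  assumes "r < n" "j < 2"
  shows "(\<Sum>i<n. rat_of_int (A_cell $$ (r, i)) * expo_mat $$ (i, j)) = - rat_of_int (A_cocell $$ (r, j))"
proof -
  have "(\<Sum>i<n. rat_of_int (A_cell $$ (r, i)) * expo_mat $$ (i, j))
      = - rat_of_int (\<Sum>i<n. A_cell $$ (r, i) * (adj_cell * A_cocell) $$ (i, j)) / rat_of_int (det A_cell)"
    using assms unfolding expo_mat_def by (simp add: sum_divide_distrib sum_negf)
  then show ?thesis
    using A_cell_adj_cell_A_cocell[OF assms] det_A_cell_nonzero by simp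
qed

lemma solves_exponent_equation:
  assumes M: "M \<in> carrier_mat n 2"
  shows "map_mat rat_of_int A_cell * M = - map_mat rat_of_int A_cocell \<longleftrightarrow>
    (\<forall>r<n. \<forall>j<2. (\<Sum>i<n. rat_of_int (A_cell $$ (r, i)) * M $$ (i, j)) = - rat_of_int (A_cocell $$ (r, j)))"
proof -
  have ACc: "map_mat rat_of_int A_cell \<in> carrier_mat n n" using A_cell_carrier by simp
  have entry: "(map_mat rat_of_int A_cell * M) $$ (r, j) = (\<Sum>i<n. rat_of_int (A_cell $$ (r, i)) * M $$ (i, j))"
    if "r < n" "j < 2" for r j
    using index_mult_mat_sum[OF ACc M that] that A_cell_carrier by simp
  show ?thesis
  proof
    assume eq: "map_mat rat_of_int A_cell * M = - map_mat rat_of_int A_cocell"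
    show "\<forall>r<n. \<forall>j<2. (\<Sum>i<n. rat_of_int (A_cell $$ (r, i)) * M $$ (i, j)) = - rat_of_int (A_cocell $$ (r, j))"
    proof (intro allI impI)
      fix r j :: nat assume rj: "r < n" "j < 2"
      have "(map_mat rat_of_int A_cell * M) $$ (r, j) = (- map_mat rat_of_int A_cocell) $$ (r, j)"
        using eq by simp
      then show "(\<Sum>i<n. rat_of_int (A_cell $$ (r, i)) * M $$ (i, j)) = - rat_of_int (A_cocell $$ (r, j))"
        using entry[OF rj] rj A_cocell_carrier by simp
    qed
  next
    assume sol: "\<forall>r<n. \<forall>j<2. (\<Sum>i<n. rat_of_int (A_cell $$ (r, i)) * M $$ (i, j)) = - rat_of_int (A_cocell $$ (r, j))"
    show "map_mat rat_of_int A_cell * M = - map_mat rat_of_int A_cocell"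
      by (rule eq_matI) (use sol entry M A_cell_carrier A_cocell_carrier in auto)
  qed
qed

lemma gexp_eq_expo_mat: "gexp A C = expo_mat"
proof -
  have Ec: "expo_mat \<in> carrier_mat n 2" unfolding expo_mat_def by simp
  have "gexp A C = (THE M. M \<in> carrier_mat n 2 \<and>
      map_mat rat_of_int A_cell * M = - map_mat rat_of_int A_cocell)"
    unfolding gexp_def dim_A A_cell_def A_cocell_def cell_def cocell_def ..
  also have "\<dots> = expo_mat"
  proof (rule the_equality)
    show "expo_mat \<in> carrier_mat n 2 \<and> map_mat rat_of_int A_cell * expo_mat = - map_mat rat_of_int A_cocell"
      using Ec A_cell_expo_mat by (simp add: solves_exponent_equation)
    fix M assume "M \<in> carrier_mat n 2 \<and> map_mat rat_of_int A_cell * M = - map_mat rat_of_int A_cocell"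
    then have M: "M \<in> carrier_mat n 2" and sol: "\<forall>r<n. \<forall>j<2.
        (\<Sum>i<n. rat_of_int (A_cell $$ (r, i)) * M $$ (i, j)) = - rat_of_int (A_cocell $$ (r, j))"
      by (auto simp: solves_exponent_equation)
    show "M = expo_mat"
    proof (rule eq_matI)
      fix i j assume "i < dim_row expo_mat" "j < dim_col expo_mat"
      then have ij: "i < n" "j < 2" unfolding expo_mat_def by auto
      have "(\<lambda>k. M $$ (k, j) - expo_mat $$ (k, j)) i = 0"
      proof (rule int_mat_kernel_trivial[OF A_cell_carrier det_A_cell_nonzero _ ij(1)], intro allI impI)
        fix r assume "r < n"
        then show "(\<Sum>k<n. rat_of_int (A_cell $$ (r, k)) * (M $$ (k, j) - expo_mat $$ (k, j))) = 0"
          using sol A_cell_expo_mat ij by (simp add: right_diff_distrib sum_subtractf)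
      qed
      then show "M $$ (i, j) = expo_mat $$ (i, j)" by simp
    qed (use M Ec in auto)
  qed
  finally show ?thesis .
qed

definition expo :: "nat \<Rightarrow> nat \<Rightarrow> complex" where
  "expo i j = of_rat (expo_mat $$ (i, j))"

lemma expo_real: "expo i j \<in> \<real>"
proof -
  obtain a b where "quotient_of (expo_mat $$ (i, j)) = (a, b)" by (cases "quotient_of (expo_mat $$ (i, j))")
  then have "expo_mat $$ (i, j) = of_int a / of_int b" by (rule quotient_of_div)
  then show ?thesis unfolding expo_def by (simp add: of_rat_divide)
qed

lemma A_expo:
  assumes "r < n" "j < 2"
  shows "(\<Sum>i<n. of_int (A $$ (r, cell ! i)) * expo i j) = - of_int (A $$ (r, cocell ! j))"
proof -
  have "of_rat (\<Sum>i<n. rat_of_int (A_cell $$ (r, i)) * expo_mat $$ (i, j))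
      = (of_rat (- rat_of_int (A_cocell $$ (r, j))) :: complex)"
    using A_cell_expo_mat[OF assms] by simp
  then show ?thesis
    using assms by (simp add: of_rat_sum of_rat_mult expo_def A_cell_index A_cocell_index of_rat_minus)
qed

lemma kernel_space_iff:
  "u \<in> kernel_space A \<longleftrightarrow> (\<forall>i\<ge>n+3. u i = 0) \<and>
     u 0 + (\<Sum>i<n. u (cell ! i)) + (u (cocell ! 0) + u (cocell ! 1)) = 0 \<and>
     (\<forall>r<n. (\<Sum>i<n. of_int (A $$ (r, cell ! i)) * u (cell ! i)) +
        (of_int (A $$ (r, cocell ! 0)) * u (cocell ! 0) + of_int (A $$ (r, cocell ! 1)) * u (cocell ! 1)) = 0)"
  unfolding kernel_space_def dim_A
  using first_col_zero by (simp add: sum_split_cell[of u] sum_split_cell[of "\<lambda>i. of_int (A $$ (_, i)) * u i"])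

lemma kernel_space_lincomb:
  assumes u: "u \<in> kernel_space A" and v: "v \<in> kernel_space A"
  shows "(\<lambda>k. a * u k + b * v k) \<in> kernel_space A"
proof -
  have "(\<Sum>i<dim_col A. f i * (a * u i + b * v i)) =
      a * (\<Sum>i<dim_col A. f i * u i) + b * (\<Sum>i<dim_col A. f i * v i)" for f :: "nat \<Rightarrow> complex"
    by (simp add: sum.distrib sum_distrib_left algebra_simps)
  from this[of "\<lambda>_. 1"] this[of "\<lambda>i. of_int (A $$ (_, i))"] show ?thesis
    using u v unfolding kernel_space_def by auto
qed

lemma kernel_vanish_on_cocell:
  assumes v: "v \<in> kernel_space A" and "v (cocell ! 0) = 0" "v (cocell ! 1) = 0"
  shows "v k = 0"
proof -
  have "\<forall>r<n. (\<Sum>i<n. of_int (A_cell $$ (r, i)) * v (cell ! i)) = 0"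
    using v assms(2,3) unfolding kernel_space_iff by (auto simp: A_cell_index)
  then have v_cell: "v (cell ! i) = 0" if "i < n" for i
    using int_mat_kernel_trivial[OF A_cell_carrier det_A_cell_nonzero, where x = "\<lambda>i. v (cell ! i)"] that
    by simp
  then have "v 0 = 0" using v assms(2,3) unfolding kernel_space_iff by auto
  show ?thesis
  proof (cases "k < n + 3")
    case True
    then show ?thesis by (cases rule: index_cases) (use v_cell \<open>v 0 = 0\<close> assms in auto)
  qed (use v in \<open>auto simp: kernel_space_def dim_A\<close>)
qed

definition kernel_basis :: "nat \<Rightarrow> nat \<Rightarrow> complex" where
  "kernel_basis j k = (if k = 0 then - (1 + (\<Sum>i<n. expo i j)) else if k \<in> C then expo (THE i. i < n \<and> cell ! i = k) j
     else if k = cocell ! j then 1 else 0)"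

lemma kernel_basis_0: "kernel_basis j 0 = - (1 + (\<Sum>i<n. expo i j))"
  unfolding kernel_basis_def by simp

lemma kernel_basis_cell: "i < n \<Longrightarrow> kernel_basis j (cell ! i) = expo i j"
proof -
  assume i: "i < n"
  have "(THE i'. i' < n \<and> cell ! i' = cell ! i) = i"
    using i cell by (intro the_equality) (auto simp: nth_eq_iff_index_eq)
  then show ?thesis unfolding kernel_basis_def using cell_nth[OF i] by simp
qed

lemma kernel_basis_cocell: "j < 2 \<Longrightarrow> j' < 2 \<Longrightarrow> kernel_basis j (cocell ! j') = (if j = j' then 1 else 0)"
  unfolding kernel_basis_def using cocell_nth[of j'] cocell_nth_distinct by (auto simp: less_2_cases_iff)

lemma kernel_basis_real: "kernel_basis j k \<in> \<real>"
  unfolding kernel_basis_def using expo_real by auto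

lemma kernel_basis_in_kernel:
  assumes j: "j < 2"
  shows "kernel_basis j \<in> kernel_space A"
  unfolding kernel_space_iff
proof (intro conjI allI impI)
  show "kernel_basis j k = 0" if "n + 3 \<le> k" for k
    using that C_subset cocell_nth[OF j] unfolding kernel_basis_def by auto
  have "kernel_basis j (cocell ! 0) + kernel_basis j (cocell ! 1) = 1"
    using j kernel_basis_cocell by (auto simp: less_2_cases_iff)
  then show "kernel_basis j 0 + (\<Sum>i<n. kernel_basis j (cell ! i)) + (kernel_basis j (cocell ! 0) + kernel_basis j (cocell ! 1)) = 0"
    by (simp add: kernel_basis_0 kernel_basis_cell)
  fix r assume r: "r < n"
  have "of_int (A $$ (r, cocell ! 0)) * kernel_basis j (cocell ! 0) + of_int (A $$ (r, cocell ! 1)) * kernel_basis j (cocell ! 1)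
      = of_int (A $$ (r, cocell ! j))"
    using j kernel_basis_cocell by (auto simp: less_2_cases_iff)
  then show "(\<Sum>i<n. of_int (A $$ (r, cell ! i)) * kernel_basis j (cell ! i)) +
      (of_int (A $$ (r, cocell ! 0)) * kernel_basis j (cocell ! 0) + of_int (A $$ (r, cocell ! 1)) * kernel_basis j (cocell ! 1)) = 0"
    using A_expo[OF r j] by (simp add: kernel_basis_cell)
qed

lemma kernel_decomp:
  assumes u: "u \<in> kernel_space A"
  shows "u k = u (cocell ! 0) * kernel_basis 0 k + u (cocell ! 1) * kernel_basis 1 k"
proof -
  let ?w = "\<lambda>k. u (cocell ! 0) * kernel_basis 0 k + u (cocell ! 1) * kernel_basis 1 k"
  have "?w \<in> kernel_space A"
    using kernel_space_lincomb[OF kernel_basis_in_kernel kernel_basis_in_kernel] by simp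
  then have diff: "(\<lambda>k. 1 * u k + (-1) * ?w k) \<in> kernel_space A"
    by (rule kernel_space_lincomb[OF u])
  have "1 * u (cocell ! 0) + (-1) * ?w (cocell ! 0) = 0"
    and "1 * u (cocell ! 1) + (-1) * ?w (cocell ! 1) = 0"
    by (simp_all add: kernel_basis_cocell)
  then have "1 * u k + (-1) * ?w k = 0" by (rule kernel_vanish_on_cocell[OF diff])
  then show ?thesis by (simp add: algebra_simps)
qed

text \<open>Derivative of \<open>log \<Gamma>\<^sub>j\<close> at \<open>u\<close> in direction \<open>v\<close>; branches of \<open>\<Gamma>\<close> differ by constant factors,
  so it does not depend on the branch.\<close>
definition dlog_gamma :: "(nat \<Rightarrow> complex) \<Rightarrow> nat \<Rightarrow> (nat \<Rightarrow> complex) \<Rightarrow> complex" where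
  "dlog_gamma u j v = v (cocell ! j) / u (cocell ! j) - v 0 / u 0 +
     (\<Sum>i<n. expo i j * (v (cell ! i) / u (cell ! i) - v 0 / u 0))"

lemma dlog_gamma_lincomb:
  "dlog_gamma u j (\<lambda>k. a * v k + b * w k) = a * dlog_gamma u j v + b * dlog_gamma u j w"
proof -
  have "(\<Sum>i<n. expo i j * ((a * v (cell ! i) + b * w (cell ! i)) / u (cell ! i) - (a * v 0 + b * w 0) / u 0))
     = (\<Sum>i<n. a * (expo i j * (v (cell ! i) / u (cell ! i) - v 0 / u 0)) +
          b * (expo i j * (w (cell ! i) / u (cell ! i) - w 0 / u 0)))"
    by (intro sum.cong refl) (simp add: algebra_simps add_divide_distrib diff_divide_distrib)
  also have "\<dots> = a * (\<Sum>i<n. expo i j * (v (cell ! i) / u (cell ! i) - v 0 / u 0)) +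
       b * (\<Sum>i<n. expo i j * (w (cell ! i) / u (cell ! i) - w 0 / u 0))"
    by (simp add: sum.distrib sum_distrib_left)
  finally have sums: "(\<Sum>i<n. expo i j * ((a * v (cell ! i) + b * w (cell ! i)) / u (cell ! i) - (a * v 0 + b * w 0) / u 0))
     = a * (\<Sum>i<n. expo i j * (v (cell ! i) / u (cell ! i) - v 0 / u 0)) +
       b * (\<Sum>i<n. expo i j * (w (cell ! i) / u (cell ! i) - w 0 / u 0))" .
  have "(a * x1 + b * y1) / d1 - (a * x0 + b * y0) / d0 + (a * s + b * t)
      = a * (x1 / d1 - x0 / d0 + s) + b * (y1 / d1 - y0 / d0 + t)" for x1 y1 d1 x0 y0 d0 s t :: complex
    by (simp add: add_divide_distrib diff_divide_distrib ring_distribs)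
  then show ?thesis unfolding dlog_gamma_def sums .
qed

lemma dlog_gamma_kernel:
  assumes "u \<in> kernel_space A"
  shows "dlog_gamma w j u = u (cocell ! 0) * dlog_gamma w j (kernel_basis 0) + u (cocell ! 1) * dlog_gamma w j (kernel_basis 1)"
proof -
  have "u = (\<lambda>k. u (cocell ! 0) * kernel_basis 0 k + u (cocell ! 1) * kernel_basis 1 k)"
    by (rule ext) (rule kernel_decomp[OF assms])
  then have "dlog_gamma w j u = dlog_gamma w j (\<lambda>k. u (cocell ! 0) * kernel_basis 0 k + u (cocell ! 1) * kernel_basis 1 k)"
    by (rule arg_cong)
  then show ?thesis by (simp only: dlog_gamma_lincomb)
qed

text \<open>\<open>\<Gamma>\<close> is homogeneous of degree 0.\<close>
lemma dlog_gamma_self: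
  assumes "\<forall>k<n+3. u k \<noteq> 0" "j < 2"
  shows "dlog_gamma u j u = 0"
  using assms cell_nth cocell_nth unfolding dlog_gamma_def by auto

lemma dlog_gamma_kernel_basis_sym: "dlog_gamma u 0 (kernel_basis 1) = dlog_gamma u 1 (kernel_basis 0)"
proof -
  have "dlog_gamma u j (kernel_basis m) = (if j = m then 1 / u (cocell ! j) else 0)
     + (\<Sum>i<n. expo i j * expo i m / u (cell ! i)) + (1 + (\<Sum>i<n. expo i m)) * (1 + (\<Sum>i<n. expo i j)) / u 0"
    if "j < 2" "m < 2" for j m
  proof -
    have "(\<Sum>i<n. expo i j * (kernel_basis m (cell ! i) / u (cell ! i) - kernel_basis m 0 / u 0))
        = (\<Sum>i<n. expo i j * expo i m / u (cell ! i) + expo i j * ((1 + (\<Sum>i<n. expo i m)) / u 0))"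
      by (intro sum.cong refl) (simp add: kernel_basis_cell kernel_basis_0 algebra_simps add_divide_distrib diff_divide_distrib)
    also have "\<dots> = (\<Sum>i<n. expo i j * expo i m / u (cell ! i)) + (\<Sum>i<n. expo i j) * ((1 + (\<Sum>i<n. expo i m)) / u 0)"
      by (simp only: sum.distrib sum_distrib_right)
    finally show ?thesis
      unfolding dlog_gamma_def using that
      by (simp add: kernel_basis_cocell kernel_basis_0 algebra_simps add_divide_distrib diff_divide_distrib)
  qed
  then show ?thesis by (simp add: mult.commute)
qed

text \<open>The exponents become integers after multiplying by the odd number \<open>den\<close>, so \<open>\<Gamma>\<^sub>j\<^sup>d\<^sup>e\<^sup>n\<close> is a
  Laurent monomial \<open>gamma_pow\<close> in the coordinates.\<close>
definition den :: nat where "den = nat \<bar>det A_cell\<bar>"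

definition int_expo :: "nat \<Rightarrow> nat \<Rightarrow> int" where
  "int_expo i j = - (sgn (det A_cell) * (adj_cell * A_cocell) $$ (i, j))"

lemma odd_den: "odd den"
  using odd_det_A_cell unfolding den_def by (simp add: even_nat_iff)

lemma den_pos: "den > 0"
  using odd_den by (cases den) auto

lemma den_expo_mat: "i < n \<Longrightarrow> j < 2 \<Longrightarrow> of_nat den * expo_mat $$ (i, j) = of_int (int_expo i j)"
proof -
  assume ij: "i < n" "j < 2"
  have "rat_of_int \<bar>det A_cell\<bar> / rat_of_int (det A_cell) = rat_of_int (sgn (det A_cell))"
    using det_A_cell_nonzero by (cases "det A_cell > 0") (auto simp: field_simps)
  then show ?thesis
    using ij det_A_cell_nonzero unfolding den_def int_expo_def expo_mat_def by (simp add: field_simps)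
qed

lemma den_expo: "i < n \<Longrightarrow> j < 2 \<Longrightarrow> of_nat den * expo i j = of_int (int_expo i j)"
  using arg_cong[OF den_expo_mat, of _ _ "of_rat :: rat \<Rightarrow> complex"] unfolding expo_def
  by (simp add: of_rat_mult)

definition gamma_pow :: "(nat \<Rightarrow> 'a::field) \<Rightarrow> nat \<Rightarrow> 'a" where
  "gamma_pow u j = (u (cocell ! j) / u 0) ^ den * (\<Prod>i<n. (u (cell ! i) / u 0) powi (int_expo i j))"

lemma gamma_pow_scale: "c \<noteq> 0 \<Longrightarrow> gamma_pow (\<lambda>k. c * u k) j = gamma_pow u j"
  unfolding gamma_pow_def by simp

lemma gamma_pow_of_real: "of_real (gamma_pow u j) = gamma_pow (\<lambda>k. of_real (u k) :: complex) j"
  unfolding gamma_pow_def by simp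

lemma gamma_set_iff:
  "(a, b) \<in> gamma_set A C u \<longleftrightarrow> (\<exists>L. (\<forall>i<n. exp (L i) = u (cell ! i) / u 0) \<and>
     a = u (cocell ! 0) / u 0 * exp (\<Sum>i<n. expo i 0 * L i) \<and>
     b = u (cocell ! 1) / u 0 * exp (\<Sum>i<n. expo i 1 * L i))"
  unfolding gamma_set_def Let_def cell_def[symmetric] cocell_def[symmetric] gexp_eq_expo_mat dim_A expo_def
  by auto

lemma gamma_set_pow:
  assumes "(a, b) \<in> gamma_set A C u"
  shows "a ^ den = gamma_pow u 0 \<and> b ^ den = gamma_pow u 1"
proof -
  obtain L where L: "\<forall>i<n. exp (L i) = u (cell ! i) / u 0"
    and ab: "a = u (cocell ! 0) / u 0 * exp (\<Sum>i<n. expo i 0 * L i)"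
       "b = u (cocell ! 1) / u 0 * exp (\<Sum>i<n. expo i 1 * L i)"
    using assms unfolding gamma_set_iff by auto
  have "exp (\<Sum>i<n. expo i j * L i) ^ den = (\<Prod>i<n. (u (cell ! i) / u 0) powi (int_expo i j))"
    if "j < 2" for j
  proof -
    have "exp (\<Sum>i<n. expo i j * L i) ^ den = exp (\<Sum>i<n. of_int (int_expo i j) * L i)"
      using den_expo that by (simp add: exp_of_nat_mult[symmetric] sum_distrib_left mult.assoc[symmetric])
    also have "\<dots> = (\<Prod>i<n. exp (L i) powi (int_expo i j))"
      by (simp add: exp_sum exp_power_int)
    finally show ?thesis using L by simp
  qed
  then show ?thesis unfolding gamma_pow_def ab power_mult_distrib by simp
qed

lemma gamma_real_pow:
  "fst (gamma_real A C u) ^ den = gamma_pow u 0 \<and> snd (gamma_real A C u) ^ den = gamma_pow u 1"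
proof -
  define P where "P j = (\<Prod>i<n. realpow_rat (u (cell ! i) / u 0) (expo_mat $$ (i, j)))" for j
  have G: "gamma_real A C u = (u (cocell ! 0) / u 0 * P 0, u (cocell ! 1) / u 0 * P 1)"
    unfolding gamma_real_def Let_def cell_def[symmetric] cocell_def[symmetric] gexp_eq_expo_mat dim_A P_def
    by simp
  have "P j ^ den = (\<Prod>i<n. (u (cell ! i) / u 0) powi (int_expo i j))" if "j < 2" for j
    unfolding P_def prod_power_distrib using realpow_rat_power[OF odd_den den_expo_mat] that by simp
  then show ?thesis unfolding G gamma_pow_def fst_conv snd_conv power_mult_distrib by simp
qed

lemma gamma_real_eq_of_gamma_set:
  assumes "(of_real r1, of_real r2) \<in> gamma_set A C (\<lambda>k. c * of_real (u k))" and "c \<noteq> 0"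
  shows "gamma_real A C u = (r1, r2)"
proof -
  have "of_real (r1 ^ den) = (of_real (gamma_pow u 0) :: complex)"
    and "of_real (r2 ^ den) = (of_real (gamma_pow u 1) :: complex)"
    using gamma_set_pow[OF assms(1)] unfolding gamma_pow_scale[OF assms(2)] gamma_pow_of_real by simp_all
  then have "fst (gamma_real A C u) ^ den = r1 ^ den" "snd (gamma_real A C u) ^ den = r2 ^ den"
    using gamma_real_pow by (simp_all only: of_real_eq_iff)
  then have "root den (fst (gamma_real A C u) ^ den) = root den (r1 ^ den)"
    "root den (snd (gamma_real A C u) ^ den) = root den (r2 ^ den)"
    by simp_all
  then show ?thesis by (simp add: odd_real_root_power_cancel[OF odd_den] prod_eq_iff)
qed

end

section \<open>Rigidity of the parametrization\<close>

locale horn_kapranov = odd_cell_coords +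
  fixes \<alpha> \<beta> :: "nat \<Rightarrow> real" and p :: "int poly poly" and z1 z2 g1 g2 :: complex
  assumes kernel_param: "{lform \<alpha> \<beta> (n+3) x1 x2 | x1 x2. True} = kernel_space A"
    and zero_set_p: "{(x, y). eval2 p x y = 0} = nabla_bar A C"
    and gamma_base: "(g1, g2) \<in> gamma_set A C (lform \<alpha> \<beta> (n+3) z1 z2)"
    and g1_nonzero: "g1 \<noteq> 0" and g2_nonzero: "g2 \<noteq> 0"
begin

abbreviation ell :: "complex \<Rightarrow> complex \<Rightarrow> nat \<Rightarrow> complex" where
  "ell x1 x2 \<equiv> lform \<alpha> \<beta> (n+3) x1 x2"

definition y :: "nat \<Rightarrow> complex" where "y = ell z1 z2"

definition gbase :: "nat \<Rightarrow> complex" where "gbase j = (if j = 0 then g1 else g2)"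

lemma ell_add_scaled: "ell (a1 + t * b1) (a2 + t * b2) k = ell a1 a2 k + t * ell b1 b2 k"
  unfolding lform_def by (simp add: algebra_simps)

lemma ell_scale: "ell (c * x1) (c * x2) k = c * ell x1 x2 k"
  unfolding lform_def by (simp add: algebra_simps)

lemma ell_in_kernel: "ell x1 x2 \<in> kernel_space A"
  using kernel_param by blast

lemma kernel_obtain_ell:
  assumes "u \<in> kernel_space A"
  obtains x1 x2 where "u = ell x1 x2"
  using assms kernel_param by blast

lemma exists_base_logs:
  "\<exists>L. (\<forall>i<n. exp (L i) = y (cell ! i) / y 0) \<and>
     (\<forall>j<2. gbase j = y (cocell ! j) / y 0 * exp (\<Sum>i<n. expo i j * L i))"
proof -
  obtain L where L: "\<forall>i<n. exp (L i) = y (cell ! i) / y 0"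
    "g1 = y (cocell ! 0) / y 0 * exp (\<Sum>i<n. expo i 0 * L i)"
    "g2 = y (cocell ! 1) / y 0 * exp (\<Sum>i<n. expo i 1 * L i)"
    using gamma_base unfolding gamma_set_iff y_def[symmetric] by blast
  then show ?thesis unfolding gbase_def by (auto simp: less_2_cases_iff)
qed

lemma y_nonzero:
  assumes "k < n + 3"
  shows "y k \<noteq> 0"
proof -
  obtain L where L: "\<forall>i<n. exp (L i) = y (cell ! i) / y 0"
    "\<And>j. j < 2 \<Longrightarrow> gbase j = y (cocell ! j) / y 0 * exp (\<Sum>i<n. expo i j * L i)"
    using exists_base_logs by blast
  have g: "gbase j \<noteq> 0" for j using g1_nonzero g2_nonzero unfolding gbase_def by simp
  have cocell: "y (cocell ! j) \<noteq> 0" if "j < 2" for j using L(2)[OF that] g[of j] by auto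
  have y0: "y 0 \<noteq> 0" using L(2)[of 0] g[of 0] by auto
  have "y (cell ! i) \<noteq> 0" if "i < n" for i
    using L(1) that y0 by (metis divide_eq_0_iff exp_not_eq_zero)
  with assms show ?thesis by (cases rule: index_cases) (use cocell y0 in auto)
qed

text \<open>On \<open>near\<close>, all coordinates of \<open>ell x1 x2\<close> relative to those of \<open>y\<close> lie in the right
  half plane, so principal logarithms continue the branch of \<open>\<Gamma>\<close> through \<open>(g1, g2)\<close>
  holomorphically.\<close>
definition ratio :: "nat \<Rightarrow> complex \<Rightarrow> complex \<Rightarrow> complex" where
  "ratio k x1 x2 = ell x1 x2 k / y k"

definition near :: "complex \<Rightarrow> complex \<Rightarrow> bool" where
  "near x1 x2 \<longleftrightarrow> (\<forall>k<n+3. 0 < Re (ratio k x1 x2))"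

definition branch :: "nat \<Rightarrow> complex \<Rightarrow> complex \<Rightarrow> complex" where
  "branch j x1 x2 = gbase j * (ratio (cocell ! j) x1 x2 / ratio 0 x1 x2) *
     exp (\<Sum>i<n. expo i j * (Ln (ratio (cell ! i) x1 x2) - Ln (ratio 0 x1 x2)))"

lemma near_ratio_nonzero: "near x1 x2 \<Longrightarrow> k < n + 3 \<Longrightarrow> ratio k x1 x2 \<noteq> 0"
  unfolding near_def by fastforce

lemma near_ell_nonzero: "near x1 x2 \<Longrightarrow> k < n + 3 \<Longrightarrow> ell x1 x2 k \<noteq> 0"
  using near_ratio_nonzero unfolding ratio_def by fastforce

lemma ratio_base: "k < n + 3 \<Longrightarrow> ratio k z1 z2 = 1"
  unfolding ratio_def y_def[symmetric] using y_nonzero by simp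

lemma near_base: "near z1 z2"
  unfolding near_def using ratio_base by simp

lemma branch_base: "j < 2 \<Longrightarrow> branch j z1 z2 = gbase j"
  unfolding branch_def using ratio_base cell_nth cocell_nth by simp

lemma branch_in_gamma_set:
  assumes near: "near x1 x2"
  shows "(branch 0 x1 x2, branch 1 x1 x2) \<in> gamma_set A C (ell x1 x2)"
proof -
  let ?u = "ell x1 x2"
  obtain L where L: "\<forall>i<n. exp (L i) = y (cell ! i) / y 0"
    "\<And>j. j < 2 \<Longrightarrow> gbase j = y (cocell ! j) / y 0 * exp (\<Sum>i<n. expo i j * L i)"
    using exists_base_logs by blast
  define L' where "L' i = L i + Ln (ratio (cell ! i) x1 x2) - Ln (ratio 0 x1 x2)" for i
  have r0: "ratio 0 x1 x2 \<noteq> 0" "y 0 \<noteq> 0" "?u 0 \<noteq> 0"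
    using near_ratio_nonzero[OF near] y_nonzero near_ell_nonzero[OF near] by auto
  have "exp (L' i) = ?u (cell ! i) / ?u 0" if i: "i < n" for i
  proof -
    have "ratio (cell ! i) x1 x2 \<noteq> 0" "y (cell ! i) \<noteq> 0"
      using near_ratio_nonzero[OF near] y_nonzero cell_nth[OF i] by auto
    then show ?thesis
      unfolding L'_def using L(1) i r0 by (simp add: exp_diff exp_add ratio_def field_simps)
  qed
  moreover have "branch j x1 x2 = ?u (cocell ! j) / ?u 0 * exp (\<Sum>i<n. expo i j * L' i)"
    if j: "j < 2" for j
  proof -
    have "y (cocell ! j) \<noteq> 0" using y_nonzero cocell_nth[OF j] by simp
    then have "?u (cocell ! j) / ?u 0 = y (cocell ! j) / y 0 * (ratio (cocell ! j) x1 x2 / ratio 0 x1 x2)"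
      unfolding ratio_def using r0 by (simp add: field_simps)
    moreover have "(\<Sum>i<n. expo i j * L' i) = (\<Sum>i<n. expo i j * L i) +
        (\<Sum>i<n. expo i j * (Ln (ratio (cell ! i) x1 x2) - Ln (ratio 0 x1 x2)))"
      unfolding L'_def by (simp add: sum.distrib[symmetric] algebra_simps)
    ultimately show ?thesis
      unfolding branch_def L(2)[OF j] by (simp add: exp_add algebra_simps)
  qed
  ultimately show ?thesis unfolding gamma_set_iff by auto
qed

lemma gamma_set_subset_nabla_bar:
  assumes "u \<in> kernel_space A" "\<forall>k<n+3. u k \<noteq> 0"
  shows "gamma_set A C u \<subseteq> nabla_bar A C"
  using assms dim_A unfolding nabla_bar_def by (intro subset_trans[OF _ closure_subset]) auto

lemma p_branch_zero:
  assumes "near x1 x2"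
  shows "eval2 p (branch 0 x1 x2) (branch 1 x1 x2) = 0"
  using branch_in_gamma_set[OF assms] gamma_set_subset_nabla_bar[OF ell_in_kernel] near_ell_nonzero[OF assms]
    zero_set_p by blast

lemma DERIV_branch:
  assumes near: "near (x1 + t0 * e1) (x2 + t0 * e2)" and j: "j < 2"
  shows "((\<lambda>t. branch j (x1 + t * e1) (x2 + t * e2)) has_field_derivative
     branch j (x1 + t0 * e1) (x2 + t0 * e2) * dlog_gamma (ell (x1 + t0 * e1) (x2 + t0 * e2)) j (ell e1 e2))
     (at t0)"
proof -
  define a where "a k = ell x1 x2 k / y k" for k
  define b where "b k = ell e1 e2 k / y k" for k
  have ratio_ab: "ratio k (x1 + t * e1) (x2 + t * e2) = a k + t * b k" for k t
    unfolding ratio_def a_def b_def ell_add_scaled by (simp add: add_divide_distrib)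
  have Re_pos: "k < n + 3 \<Longrightarrow> 0 < Re (a k + t0 * b k)" for k
    using near unfolding near_def ratio_ab by auto
  have nz: "k < n + 3 \<Longrightarrow> a k + t0 * b k \<noteq> 0" for k
    using Re_pos by fastforce
  define S where "S t = (\<Sum>i<n. expo i j * (Ln (a (cell ! i) + t * b (cell ! i)) - Ln (a 0 + t * b 0)))" for t
  define S' where "S' = (\<Sum>i<n. expo i j * (b (cell ! i) / (a (cell ! i) + t0 * b (cell ! i)) - b 0 / (a 0 + t0 * b 0)))"
  have dS: "(S has_field_derivative S') (at t0)"
    unfolding S_def S'_def using cell_nth
    by (intro DERIV_sum DERIV_cmult DERIV_diff DERIV_Ln_affine Re_pos) auto
  define Q where "Q t = (a (cocell ! j) + t * b (cocell ! j)) / (a 0 + t * b 0)" for t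
  define Q' where "Q' = (b (cocell ! j) * (a 0 + t0 * b 0) - (a (cocell ! j) + t0 * b (cocell ! j)) * b 0) /
        ((a 0 + t0 * b 0) * (a 0 + t0 * b 0))"
  have dQ: "(Q has_field_derivative Q') (at t0)"
    unfolding Q_def Q'_def by (intro DERIV_divide nz) (auto intro!: derivative_eq_intros)
  have branch_eq: "branch j (x1 + t * e1) (x2 + t * e2) = gbase j * Q t * exp (S t)" for t
    unfolding branch_def ratio_ab Q_def S_def by simp
  have "((\<lambda>t. gbase j * Q t * exp (S t)) has_field_derivative
      gbase j * Q' * exp (S t0) + exp (S t0) * S' * (gbase j * Q t0)) (at t0)"
    by (intro DERIV_mult DERIV_cmult dQ DERIV_chain2[OF DERIV_exp dS])
  moreover have "ell e1 e2 k / ell (x1 + t0 * e1) (x2 + t0 * e2) k = b k / (a k + t0 * b k)"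
    if "k < n + 3" for k
    unfolding a_def b_def ell_add_scaled using y_nonzero[OF that] by (simp add: field_simps)
  then have "dlog_gamma (ell (x1 + t0 * e1) (x2 + t0 * e2)) j (ell e1 e2) =
     b (cocell ! j) / (a (cocell ! j) + t0 * b (cocell ! j)) - b 0 / (a 0 + t0 * b 0) + S'"
    unfolding dlog_gamma_def S'_def using cocell_nth[OF j] cell_nth by simp
  moreover have "G * ((bD * A0 - AD * b0) / (A0 * A0)) * E + E * T * (G * (AD / A0))
      = G * (AD / A0) * E * (bD / AD - b0 / A0 + T)" if "A0 \<noteq> 0" "AD \<noteq> 0" for G bD A0 AD b0 E T :: complex
    using that by (simp add: field_simps)
  then have "gbase j * Q' * exp (S t0) + exp (S t0) * S' * (gbase j * Q t0)
      = gbase j * Q t0 * exp (S t0) * (b (cocell ! j) / (a (cocell ! j) + t0 * b (cocell ! j)) -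
          b 0 / (a 0 + t0 * b 0) + S')"
    unfolding Q_def Q'_def using nz[of 0] nz[of "cocell ! j"] cocell_nth[OF j] by simp
  ultimately show ?thesis unfolding branch_eq by simp
qed

lemma open_near_line: "open {t. near (x1 + t * e1) (x2 + t * e2)}"
proof -
  have "{t. near (x1 + t * e1) (x2 + t * e2)} =
      (\<Inter>k\<in>{..<n+3}. {t. 0 < Re ((ell x1 x2 k + t * ell e1 e2 k) / y k)})"
    unfolding near_def ratio_def ell_add_scaled by auto
  also have "open \<dots>"
    using y_nonzero by (intro open_INT ballI finite_lessThan open_Collect_less continuous_intros) auto
  finally show ?thesis .
qed

definition log_grad :: "nat \<Rightarrow> complex \<Rightarrow> complex \<Rightarrow> complex" where
  "log_grad j x1 x2 = (if j = 0 then eval2 (dX p) else eval2 (dY p)) (branch 0 x1 x2) (branch 1 x1 x2)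
     * branch j x1 x2"

text \<open>Differentiate the identity \<open>p (\<Gamma> (ell x)) = 0\<close> in direction \<open>e\<close>.\<close>
lemma log_grad_orthogonal:
  assumes near: "near x1 x2"
  shows "log_grad 0 x1 x2 * dlog_gamma (ell x1 x2) 0 (ell e1 e2) +
         log_grad 1 x1 x2 * dlog_gamma (ell x1 x2) 1 (ell e1 e2) = 0"
proof -
  let ?T = "{t. near (x1 + t * e1) (x2 + t * e2)}"
  let ?P = "\<lambda>t. eval2 p (branch 0 (x1 + t * e1) (x2 + t * e2)) (branch 1 (x1 + t * e1) (x2 + t * e2))"
  have near0: "near (x1 + 0 * e1) (x2 + 0 * e2)" using near by simp
  have d0: "((\<lambda>t. branch 0 (x1 + t * e1) (x2 + t * e2)) has_field_derivative
      branch 0 x1 x2 * dlog_gamma (ell x1 x2) 0 (ell e1 e2)) (at 0)"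
    using DERIV_branch[OF near0, of 0] by simp
  have d1: "((\<lambda>t. branch 1 (x1 + t * e1) (x2 + t * e2)) has_field_derivative
      branch 1 x1 x2 * dlog_gamma (ell x1 x2) 1 (ell e1 e2)) (at 0)"
    using DERIV_branch[OF near0, of 1] by simp
  have "(?P has_field_derivative log_grad 0 x1 x2 * dlog_gamma (ell x1 x2) 0 (ell e1 e2) +
      log_grad 1 x1 x2 * dlog_gamma (ell x1 x2) 1 (ell e1 e2)) (at 0)"
    using DERIV_eval2[OF d0 d1, of p] unfolding log_grad_def by (simp add: mult.assoc)
  moreover have "(?P has_field_derivative 0) (at 0)"
  proof (rule has_field_derivative_transform_within_open[of "\<lambda>_. 0" 0 0 ?T])
    show "0 \<in> ?T" using near by simp
    show "0 = ?P t" if "t \<in> ?T" for t using p_branch_zero that by simp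
  qed (simp_all add: open_near_line)
  ultimately show ?thesis using DERIV_unique by blast
qed

lemma kernel_basis_eq_ell:
  assumes "j < 2"
  obtains s1 s2 where "kernel_basis j = ell s1 s2"
  using kernel_obtain_ell[OF kernel_basis_in_kernel[OF assms]] .

text \<open>The matrix \<open>H = (dlog_gamma (ell x) j (kernel_basis m))\<^sub>j\<^sub>m\<close> is symmetric and is annihilated by
  the log gradient (on the left) and by the cocell coordinates of \<open>ell x\<close> (on the right,
  by homogeneity).\<close>
lemma dlog_gamma_vanishes:
  assumes near: "near x1 x2"
    and indep: "log_grad 0 x1 x2 * ell x1 x2 (cocell ! 1) - log_grad 1 x1 x2 * ell x1 x2 (cocell ! 0) \<noteq> 0"
    and j: "j < 2"
  shows "dlog_gamma (ell x1 x2) j (ell e1 e2) = 0"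
proof -
  let ?w0 = "log_grad 0 x1 x2" and ?w1 = "log_grad 1 x1 x2"
  let ?r0 = "ell x1 x2 (cocell ! 0)" and ?r1 = "ell x1 x2 (cocell ! 1)"
  let ?H = "\<lambda>j m. dlog_gamma (ell x1 x2) j (kernel_basis m)"
  have left: "?w0 * ?H 0 m + ?w1 * ?H 1 m = 0" if m: "m < 2" for m
  proof -
    obtain s1 s2 where "kernel_basis m = ell s1 s2" using kernel_basis_eq_ell[OF m] .
    then show ?thesis using log_grad_orthogonal[OF near, of s1 s2] by simp
  qed
  have right: "?r0 * ?H j 0 + ?r1 * ?H j 1 = 0" if "j < 2" for j
    using dlog_gamma_self[OF _ that] near_ell_nonzero[OF near] dlog_gamma_kernel[OF ell_in_kernel]
    by metis
  have sym: "?H 0 1 = ?H 1 0" by (rule dlog_gamma_kernel_basis_sym)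
  have l0: "?w0 * ?H 0 0 + ?w1 * ?H 1 0 = 0" and l1: "?w0 * ?H 0 1 + ?w1 * ?H 1 1 = 0"
    using left[of 0] left[of 1] by simp_all
  have r0: "?r0 * ?H 0 0 + ?r1 * ?H 0 1 = 0" and r1: "?r0 * ?H 1 0 + ?r1 * ?H 1 1 = 0"
    using right[of 0] right[of 1] by simp_all
  have "?H 0 1 * (?w0 * ?r1 - ?w1 * ?r0) = ?w0 * (?r0 * ?H 0 0 + ?r1 * ?H 0 1) - ?r0 * (?w0 * ?H 0 0 + ?w1 * ?H 1 0)"
    using sym by (simp add: algebra_simps)
  then have "?H 0 1 * (?w0 * ?r1 - ?w1 * ?r0) = 0" using l0 r0 by simp
  then have H01: "?H 0 1 = 0" using indep by simp
  have "?H 0 0 * (?w0 * ?r1 - ?w1 * ?r0) = ?r1 * (?w0 * ?H 0 0 + ?w1 * ?H 1 0) - ?w1 * (?r0 * ?H 0 0 + ?r1 * ?H 0 1)"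
    using sym by (simp add: algebra_simps)
  then have "?H 0 0 * (?w0 * ?r1 - ?w1 * ?r0) = 0" using l0 r0 by simp
  then have H00: "?H 0 0 = 0" using indep by simp
  have "?H 1 1 * (?w0 * ?r1 - ?w1 * ?r0) = ?w0 * (?r0 * ?H 1 0 + ?r1 * ?H 1 1) - ?r0 * (?w0 * ?H 0 1 + ?w1 * ?H 1 1)"
    using sym by (simp add: algebra_simps)
  then have "?H 1 1 * (?w0 * ?r1 - ?w1 * ?r0) = 0" using l1 r1 by simp
  then have H11: "?H 1 1 = 0" using indep by simp
  have "?H j 0 = 0" "?H j 1 = 0" using H00 H01 H11 sym j by (auto simp: less_2_cases_iff)
  then show ?thesis using dlog_gamma_kernel[OF ell_in_kernel, of "ell x1 x2" j e1 e2] by simp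
qed

definition line_regular :: "complex \<Rightarrow> complex \<Rightarrow> complex set" where
  "line_regular e1 e2 = {s. \<forall>k<n+3. ell (z1 + s * e1) (z2 + s * e2) k \<noteq> 0}"

lemma open_line_regular: "open (line_regular e1 e2)"
proof -
  have "line_regular e1 e2 = (\<Inter>k\<in>{..<n+3}. {s. ell z1 z2 k + s * ell e1 e2 k \<noteq> 0})"
    unfolding line_regular_def ell_add_scaled by auto
  also have "open \<dots>"
    by (intro open_INT ballI finite_lessThan open_Collect_neq continuous_intros)
  finally show ?thesis .
qed

lemma connected_line_regular: "connected (line_regular e1 e2)"
proof -
  have "- line_regular e1 e2 \<subseteq> (\<lambda>k. - y k / ell e1 e2 k) ` {..<n+3}"
  proof
    fix s assume "s \<in> - line_regular e1 e2"
    then obtain k where k: "k < n + 3" "y k + s * ell e1 e2 k = 0"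
      unfolding line_regular_def ell_add_scaled y_def by auto
    then have "ell e1 e2 k \<noteq> 0" using y_nonzero[OF k(1)] by auto
    then have "s = - y k / ell e1 e2 k" using k(2) by (simp add: field_simps add_eq_0_iff2)
    then show "s \<in> (\<lambda>k. - y k / ell e1 e2 k) ` {..<n+3}" using k(1) by auto
  qed
  then have "countable (- line_regular e1 e2)" by (auto intro: countable_finite finite_subset)
  then have "path_connected (- (- line_regular e1 e2))"
    by (intro path_connected_complement_countable) auto
  then show ?thesis using path_connected_imp_connected by simp
qed

lemma holomorphic_gamma_pow_line:
  "j < 2 \<Longrightarrow> (\<lambda>s. gamma_pow (ell (z1 + s * e1) (z2 + s * e2)) j) holomorphic_on line_regular e1 e2"
  unfolding gamma_pow_def ell_add_scaled line_regular_def using cell_nth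
  by (intro holomorphic_intros) auto

text \<open>\<open>\<Gamma>\<close> cannot take finitely many values on the kernel: its image is dense in the
  zero set of \<open>p\<close>, which is infinite since it contains \<open>(g1, g2)\<close>.\<close>
lemma gamma_pow_not_finitely_valued:
  assumes fin: "\<And>j. j < 2 \<Longrightarrow> finite (F j)"
    and vals: "\<And>u j. u \<in> kernel_space A \<Longrightarrow> \<forall>k<n+3. u k \<noteq> 0 \<Longrightarrow> j < 2 \<Longrightarrow> gamma_pow u j \<in> F j"
  shows False
proof -
  define R where "R j = (\<Union>c\<in>F j. {w. w ^ den = c})" for j
  have finR: "finite (R j)" if "j < 2" for j
    unfolding R_def using fin[OF that] den_pos by auto
  have "(\<Union>u \<in> {u \<in> kernel_space A. \<forall>i<dim_col A. u i \<noteq> 0}. gamma_set A C u) \<subseteq> R 0 \<times> R 1"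
  proof (intro UN_least subsetI)
    fix u ab assume u: "u \<in> {u \<in> kernel_space A. \<forall>i<dim_col A. u i \<noteq> 0}" and ab: "ab \<in> gamma_set A C u"
    obtain a b where "ab = (a, b)" by (cases ab)
    then show "ab \<in> R 0 \<times> R 1"
      using gamma_set_pow ab vals[of u 0] vals[of u 1] u dim_A unfolding R_def by fastforce
  qed
  then have "nabla_bar A C \<subseteq> R 0 \<times> R 1" unfolding nabla_bar_def
    by (rule closure_minimal) (simp add: finite_imp_closed finR)
  then have "{(x, y). eval2 p x y = 0} \<subseteq> R 0 \<times> R 1" using zero_set_p by simp
  moreover have "finite (R 0 \<times> R 1)" using finR by simp
  moreover have "eval2 p g1 g2 = 0"
    using p_branch_zero[OF near_base] branch_base[of 0] branch_base[of 1] unfolding gbase_def by simp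
  ultimately show False using eval2_zero_set_infinite finite_subset by blast
qed

text \<open>Every kernel vector is a multiple of a point of the line \<open>z + s e\<close> or of \<open>e\<close>, and
  \<open>gamma_pow\<close> is invariant under scaling.\<close>
lemma gamma_pow_two_values:
  assumes indep: "z1 * e2 - z2 * e1 \<noteq> 0"
    and const: "\<And>s. s \<in> line_regular e1 e2 \<Longrightarrow> gamma_pow (ell (z1 + s * e1) (z2 + s * e2)) j = c"
    and u: "u \<in> kernel_space A" "\<forall>k<n+3. u k \<noteq> 0"
  shows "gamma_pow u j \<in> {c, gamma_pow (ell e1 e2) j}"
proof -
  obtain x1 x2 where ux: "u = ell x1 x2" using kernel_obtain_ell[OF u(1)] .
  obtain a b where x: "x1 = a * z1 + b * e1" "x2 = a * z2 + b * e2"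
    using independent_coordinates[OF indep] .
  show ?thesis
  proof (cases "a = 0")
    case False
    then have "x1 = a * (z1 + b / a * e1)" "x2 = a * (z2 + b / a * e2)"
      unfolding x by (simp_all add: field_simps)
    then have ue: "u = (\<lambda>k. a * ell (z1 + b / a * e1) (z2 + b / a * e2) k)"
      unfolding ux by (auto simp: ell_scale)
    then have "b / a \<in> line_regular e1 e2" using u(2) unfolding line_regular_def by auto
    then show ?thesis unfolding ue gamma_pow_scale[OF False] using const[of "b / a"] by simp
  next
    case True
    then have ue: "u = (\<lambda>k. b * ell e1 e2 k)" unfolding ux x by (auto simp: ell_scale)
    then have "b \<noteq> 0" using u(2) by force
    then show ?thesis unfolding ue using gamma_pow_scale[of b "ell e1 e2" j] by simp
  qed
qed

lemma independence_persists_on_line: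
  assumes indep: "log_grad 0 z1 z2 * y (cocell ! 1) - log_grad 1 z1 z2 * y (cocell ! 0) \<noteq> 0"
  obtains r where "r > 0" "\<And>s. s \<in> ball 0 r \<Longrightarrow> near (z1 + s * e1) (z2 + s * e2) \<and>
    log_grad 0 (z1 + s * e1) (z2 + s * e2) * ell (z1 + s * e1) (z2 + s * e2) (cocell ! 1) -
    log_grad 1 (z1 + s * e1) (z2 + s * e2) * ell (z1 + s * e1) (z2 + s * e2) (cocell ! 0) \<noteq> 0"
proof -
  define F where "F s = log_grad 0 (z1 + s * e1) (z2 + s * e2) * ell (z1 + s * e1) (z2 + s * e2) (cocell ! 1)
       - log_grad 1 (z1 + s * e1) (z2 + s * e2) * ell (z1 + s * e1) (z2 + s * e2) (cocell ! 0)" for s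
  have near0: "near (z1 + 0 * e1) (z2 + 0 * e2)" using near_base by simp
  have cont_branch: "isCont (\<lambda>s. branch j (z1 + s * e1) (z2 + s * e2)) 0" if "j < 2" for j
    using DERIV_continuous[OF DERIV_branch[OF near0 that]] .
  have "isCont (\<lambda>s. eval2 q (branch 0 (z1 + s * e1) (z2 + s * e2)) (branch 1 (z1 + s * e1) (z2 + s * e2))) 0"
    for q using DERIV_continuous[OF DERIV_eval2[OF DERIV_branch[OF near0, of 0] DERIV_branch[OF near0, of 1]]]
    by simp
  then have "isCont F 0"
    unfolding F_def log_grad_def ell_add_scaled using cont_branch
    by (intro continuous_intros) auto
  moreover have "F 0 \<noteq> 0" using indep unfolding F_def y_def by simp
  ultimately obtain r1 where r1: "r1 > 0" "\<And>s. dist 0 s < r1 \<Longrightarrow> F s \<noteq> 0"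
    using continuous_at_avoid by blast
  have "open {t. near (z1 + t * e1) (z2 + t * e2)}" "0 \<in> {t. near (z1 + t * e1) (z2 + t * e2)}"
    using open_near_line near_base by simp_all
  then obtain r2 where r2: "r2 > 0" "ball 0 r2 \<subseteq> {t. near (z1 + t * e1) (z2 + t * e2)}"
    using open_contains_ball by blast
  show thesis
  proof
    show "min r1 r2 > 0" using r1 r2 by simp
  qed (use r1 r2 in \<open>auto simp: F_def\<close>)
qed

lemma branch_constant_on_line:
  assumes indep: "log_grad 0 z1 z2 * y (cocell ! 1) - log_grad 1 z1 z2 * y (cocell ! 0) \<noteq> 0"
  obtains r where "r > 0" "\<And>s. s \<in> ball 0 r \<Longrightarrow> near (z1 + s * e1) (z2 + s * e2)"
    "\<And>s j. s \<in> ball 0 r \<Longrightarrow> j < 2 \<Longrightarrow> branch j (z1 + s * e1) (z2 + s * e2) = gbase j"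
proof -
  obtain r where r: "r > 0" and in_ball: "\<And>s. s \<in> ball 0 r \<Longrightarrow> near (z1 + s * e1) (z2 + s * e2) \<and>
    log_grad 0 (z1 + s * e1) (z2 + s * e2) * ell (z1 + s * e1) (z2 + s * e2) (cocell ! 1) -
    log_grad 1 (z1 + s * e1) (z2 + s * e2) * ell (z1 + s * e1) (z2 + s * e2) (cocell ! 0) \<noteq> 0"
    using independence_persists_on_line[OF indep] by blast
  have "branch j (z1 + s * e1) (z2 + s * e2) = gbase j" if j: "j < 2" and s: "s \<in> ball 0 r" for j s
  proof -
    have "((\<lambda>s. branch j (z1 + s * e1) (z2 + s * e2)) has_field_derivative 0) (at x within ball 0 r)"
      if "x \<in> ball 0 r" for x
      using DERIV_branch[of z1 x e1 z2 e2 j] dlog_gamma_vanishes[of "z1 + x * e1" "z2 + x * e2" j e1 e2]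
        in_ball[OF that] j by (simp add: has_field_derivative_at_within)
    then obtain c where c: "\<forall>x\<in>ball 0 r. branch j (z1 + x * e1) (z2 + x * e2) = c"
      using has_field_derivative_zero_constant[of "ball 0 r"] by blast
    have "0 \<in> ball (0::complex) r" using r by simp
    then have "c = gbase j" using c branch_base[OF j] by (metis add_0_right mult_zero_left)
    then show ?thesis using c s by blast
  qed
  then show thesis using that r in_ball by blast
qed

lemma gamma_pow_locally_constant_on_line:
  assumes indep: "log_grad 0 z1 z2 * y (cocell ! 1) - log_grad 1 z1 z2 * y (cocell ! 0) \<noteq> 0"
  obtains r where "r > 0" "ball 0 r \<subseteq> line_regular e1 e2"
    "\<And>s j. s \<in> ball 0 r \<Longrightarrow> j < 2 \<Longrightarrow> gamma_pow (ell (z1 + s * e1) (z2 + s * e2)) j = gbase j ^ den"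
proof -
  obtain r where r: "r > 0" and near: "\<And>s. s \<in> ball 0 r \<Longrightarrow> near (z1 + s * e1) (z2 + s * e2)"
    and const: "\<And>s j. s \<in> ball 0 r \<Longrightarrow> j < 2 \<Longrightarrow> branch j (z1 + s * e1) (z2 + s * e2) = gbase j"
    using branch_constant_on_line[OF indep] by blast
  have "gamma_pow (ell (z1 + s * e1) (z2 + s * e2)) j = gbase j ^ den" if s: "s \<in> ball 0 r" and j: "j < 2" for s j
    using gamma_set_pow[OF branch_in_gamma_set[OF near[OF s]]] const[OF s] j by (auto simp: less_2_cases_iff)
  moreover have "ball 0 r \<subseteq> line_regular e1 e2"
    using near near_ell_nonzero unfolding line_regular_def by blast
  ultimately show thesis using that r by blast
qed

lemma log_grad_parallel: "log_grad 0 z1 z2 * y (cocell ! 1) = log_grad 1 z1 z2 * y (cocell ! 0)"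
proof (rule ccontr)
  assume "log_grad 0 z1 z2 * y (cocell ! 1) \<noteq> log_grad 1 z1 z2 * y (cocell ! 0)"
  then have indep_w: "log_grad 0 z1 z2 * y (cocell ! 1) - log_grad 1 z1 z2 * y (cocell ! 0) \<noteq> 0"
    by simp
  have z: "z1 \<noteq> 0 \<or> z2 \<noteq> 0" using y_nonzero[of 0] unfolding y_def lform_def by auto
  have "\<exists>e1 e2. z1 * e2 - z2 * e1 \<noteq> 0"
  proof (cases "z2 = 0")
    case True
    then show ?thesis using z by (intro exI[of _ 0] exI[of _ 1]) simp
  next
    case False
    then show ?thesis by (intro exI[of _ 1] exI[of _ 0]) simp
  qed
  then obtain e1 e2 where indep: "z1 * e2 - z2 * e1 \<noteq> 0" by blast
  obtain r where r: "r > 0" "ball 0 r \<subseteq> line_regular e1 e2"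
    and const: "\<And>s j. s \<in> ball 0 r \<Longrightarrow> j < 2 \<Longrightarrow> gamma_pow (ell (z1 + s * e1) (z2 + s * e2)) j = gbase j ^ den"
    using gamma_pow_locally_constant_on_line[OF indep_w] by blast
  have "gamma_pow (ell (z1 + s * e1) (z2 + s * e2)) j = gbase j ^ den"
    if j: "j < 2" and s: "s \<in> line_regular e1 e2" for j s
    using analytic_continuation_open[of "ball 0 r" "line_regular e1 e2"
        "\<lambda>s. gamma_pow (ell (z1 + s * e1) (z2 + s * e2)) j" "\<lambda>_. gbase j ^ den"]
      r open_line_regular connected_line_regular holomorphic_gamma_pow_line[OF j] const[OF _ j] s
    by auto
  then show False
    using gamma_pow_not_finitely_valued[of "\<lambda>j. {gbase j ^ den, gamma_pow (ell e1 e2) j}"]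
      gamma_pow_two_values[OF indep] by blast
qed

lemma kernel_basis_real_lform:
  assumes "j < 2"
  obtains s1 s2 :: real where "kernel_basis j = (\<lambda>k. of_real (rlform \<alpha> \<beta> (n+3) s1 s2 k))"
proof -
  obtain s1 s2 where s: "kernel_basis j = ell s1 s2" using kernel_basis_eq_ell[OF assms] .
  have "kernel_basis j k = of_real (rlform \<alpha> \<beta> (n+3) (Re s1) (Re s2) k)" for k
  proof -
    have "kernel_basis j k = of_real (Re (kernel_basis j k))" using kernel_basis_real[of j k] by (simp add: Reals_def)
    then show ?thesis unfolding s lform_def rlform_def by (simp split: if_splits)
  qed
  then show thesis using that by blast
qed

text \<open>Where the gradient of \<open>p\<close> does not vanish at a real point, the log gradient is a
  nonzero real vector parallel to the cocell coordinates of \<open>y\<close>, and the real kernel basis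
  turns it into a real kernel vector.\<close>
lemma y_real_multiple:
  assumes real: "g1 = of_real r1" "g2 = of_real r2"
    and grad: "\<not> (eval2 (dX p) g1 g2 = 0 \<and> eval2 (dY p) g1 g2 = 0)"
  obtains c m1 m2 where "c \<noteq> 0" "y = (\<lambda>k. c * of_real (rlform \<alpha> \<beta> (n+3) m1 m2 k))"
proof -
  have W: "log_grad 0 z1 z2 = eval2 (dX p) g1 g2 * g1" "log_grad 1 z1 z2 = eval2 (dY p) g1 g2 * g2"
    unfolding log_grad_def using branch_base[of 0] branch_base[of 1] by (simp_all add: gbase_def)
  define \<omega>0 where "\<omega>0 = Re (log_grad 0 z1 z2)"
  define \<omega>1 where "\<omega>1 = Re (log_grad 1 z1 z2)"
  have "eval2 q g1 g2 \<in> \<real>" for q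
    unfolding real by (rule eval2_of_real_in_Reals)
  then have "log_grad 0 z1 z2 \<in> \<real>" "log_grad 1 z1 z2 \<in> \<real>"
    unfolding W using real by auto
  then have \<omega>: "log_grad 0 z1 z2 = of_real \<omega>0" "log_grad 1 z1 z2 = of_real \<omega>1"
    unfolding \<omega>0_def \<omega>1_def by simp_all
  have "log_grad 0 z1 z2 \<noteq> 0 \<or> log_grad 1 z1 z2 \<noteq> 0"
    unfolding W using grad g1_nonzero g2_nonzero by auto
  then have w0: "log_grad 0 z1 z2 \<noteq> 0"
    using log_grad_parallel y_nonzero cocell_nth[of 0] by auto
  define c where "c = y (cocell ! 0) / log_grad 0 z1 z2"
  have c: "c \<noteq> 0" unfolding c_def using w0 y_nonzero cocell_nth[of 0] by simp
  have y_cocell: "y (cocell ! 0) = c * of_real \<omega>0" "y (cocell ! 1) = c * of_real \<omega>1"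
    unfolding c_def \<omega>[symmetric] using w0 log_grad_parallel by (simp_all add: field_simps)
  obtain a1 a2 where a: "kernel_basis 0 = (\<lambda>k. of_real (rlform \<alpha> \<beta> (n+3) a1 a2 k))"
    using kernel_basis_real_lform[of 0] by auto
  obtain b1 b2 where b: "kernel_basis 1 = (\<lambda>k. of_real (rlform \<alpha> \<beta> (n+3) b1 b2 k))"
    using kernel_basis_real_lform[of 1] by auto
  have "y k = c * of_real (rlform \<alpha> \<beta> (n+3) (\<omega>0 * a1 + \<omega>1 * b1) (\<omega>0 * a2 + \<omega>1 * b2) k)" for k
  proof -
    have "y k = y (cocell ! 0) * kernel_basis 0 k + y (cocell ! 1) * kernel_basis 1 k"
      unfolding y_def by (rule kernel_decomp[OF ell_in_kernel])
    then show ?thesis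
      unfolding y_cocell a b rlform_def by (simp add: algebra_simps)
  qed
  then show thesis using that c by blast
qed

end

theorem lemma3p3:
  fixes A :: "int mat" and n :: nat and C :: "nat set"
    and \<alpha> \<beta> :: "nat \<Rightarrow> real" and p :: "int poly poly"
    and l1 l2 :: complex and g1 g2 :: real
  assumes "A \<in> carrier_mat n (n + 3)"
    and "\<forall>i<n+3. \<forall>j<n+3. i \<noteq> j \<longrightarrow> col A i \<noteq> col A j"
    and "\<forall>r<n. A $$ (r, 0) = 0"
    and "affinely_generates A"
    and "odd_cell A C"
    and "{lform \<alpha> \<beta> (n+3) x1 x2 | x1 x2. True} = kernel_space A"
    and "irreducible p"
    and "{(x, y). eval2 p x y = 0} = nabla_bar A C"
    and "(complex_of_real g1, complex_of_real g2) \<in> gamma_set A C (lform \<alpha> \<beta> (n+3) l1 l2)"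
    and "g1 \<noteq> 0" and "g2 \<noteq> 0"
    and "(complex_of_real g1, complex_of_real g2) \<in> nabla_bar A C"
    and "\<not> (eval2 (dX p) (of_real g1) (of_real g2) = 0 \<and> eval2 (dY p) (of_real g1) (of_real g2) = 0)"
  shows "\<exists>m1 m2 :: real. (m1, m2) \<noteq> (0, 0) \<and>
           rlform \<alpha> \<beta> (n+3) m1 m2 0 \<noteq> 0 \<and> (\<forall>i\<in>C. rlform \<alpha> \<beta> (n+3) m1 m2 i \<noteq> 0) \<and>
           gamma_real A C (rlform \<alpha> \<beta> (n+3) m1 m2) = (g1, g2)"
proof -
  interpret horn_kapranov A n C \<alpha> \<beta> p l1 l2 "of_real g1" "of_real g2"
    using assms(1,3,5,6,8-11) by unfold_locales simp_all
  obtain c m1 m2 where c: "c \<noteq> 0" and y: "y = (\<lambda>k. c * of_real (rlform \<alpha> \<beta> (n+3) m1 m2 k))"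
    using y_real_multiple[OF refl refl assms(13)] .
  have nonzero: "rlform \<alpha> \<beta> (n+3) m1 m2 k \<noteq> 0" if "k < n + 3" for k
    using y_nonzero[OF that] unfolding y by auto
  have "gamma_real A C (rlform \<alpha> \<beta> (n+3) m1 m2) = (g1, g2)"
    using gamma_real_eq_of_gamma_set[OF _ c] assms(9) y unfolding y_def by simp
  moreover have "(m1, m2) \<noteq> (0, 0)" using nonzero[of 0] by (auto simp: rlform_def)
  ultimately show ?thesis using nonzero C_subset by (intro exI[of _ m1] exI[of _ m2]) auto
qed

end
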